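(* Let $\mathcal{R}>0$, $\alpha>0$, $\beta>0$ be fixed, and let $\bar\gamma_{\mathrm{D}}>0$ with $\bar\gamma_{\mathrm{R}}=\alpha\bar\gamma_{\mathrm{D}}$ and $\bar\gamma_{\mathrm{E}}=\bar\gamma_{\mathrm{R}}/\beta$. Let $h_{\mathrm{S},\mathrm{R}},h_{\mathrm{R},\mathrm{D}},h_{\mathrm{S},\mathrm{E}},h_{\mathrm{R},\mathrm{E}}$ be independent $\mathcal{CN}(0,1)$ random variables, and define $$\mathcal{R}^{3}_{\mathrm{S}\to\mathrm{R}}=\log_2\frac{1+\bar\gamma_{\mathrm{R}}|h_{\mathrm{S},\mathrm{R}}|^2}{1+\bar\gamma_{\mathrm{E}}|h_{\mathrm{S},\mathrm{E}}|^2},\qquad \mathcal{R}^{3}_{\mathrm{R}\to\mathrm{D}}=\log_2\frac{1+\bar\gamma_{\mathrm{D}}|h_{\mathrm{R},\mathrm{D}}|^2}{1+\bar\gamma_{\mathrm{E}}|h_{\mathrm{R},\mathrm{E}}|^2},$$ $\mathcal{R}_3=\max\{\min\{\mathcal{R}^{3}_{\mathrm{S}\to\mathrm{R}},\mathcal{R}^{3}_{\mathrm{R}\to\mathrm{D}}\},0\}$ and $\mathcal{P}_3=\Pr(\mathcal{R}_3<\mathcal{R})$. Then as $\bar\gamma_{\mathrm{D}}\to\infty$, $$\mathcal{P}_3\approx\mathcal{P}_3^{\lim}+\hat{\mathcal{M}}_3\bar\gamma_{\mathrm{D}}^{-1},$$ in the sense that $\mathcal{P}_3\to\mathcal{P}_3^{\lim}$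 and $\bar\gamma_{\mathrm{D}}(\mathcal{P}_3-\mathcal{P}_3^{\lim})\to\hat{\mathcal{M}}_3$, where $$\mathcal{P}_3^{\lim}=1-\frac{\beta}{\beta+\alpha 2^{\mathcal{R}}}\cdot\frac{\beta}{\beta+2^{\mathcal{R}}},\qquad \hat{\mathcal{M}}_3=\frac{(2^{\mathcal{R}}-1)(1+1/\alpha)}{\left(1+\frac{\alpha}{\beta}2^{\mathcal{R}}\right)\left(1+\frac{1}{\beta}2^{\mathcal{R}}\right)}.$$
   Context: $\mathcal{CN}(0,1)$ denotes a circularly symmetric complex Gaussian random variable with zero mean and unit variance (Rayleigh fading). The quantities model a decode-and-forward relay system where the eavesdropper overhears both source and relay; $\bar\gamma$'s are average SNRs, $\mathcal{R}_3$ the secrecy capacity and $\mathcal{P}_3$ the secrecy outage probability. *)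

theory Defs
  imports "HOL-Probability.Probability"
begin

definition CN01 :: "'a measure \<Rightarrow> ('a \<Rightarrow> complex) \<Rightarrow> bool" where
  "CN01 M h \<longleftrightarrow>
     distributed M lborel h (\<lambda>z. ennreal (exp (- (cmod z)\<^sup>2) / pi))"

definition R3 :: "real \<Rightarrow> real \<Rightarrow> real \<Rightarrow> complex \<Rightarrow> complex \<Rightarrow> complex \<Rightarrow> complex \<Rightarrow> real" where
  "R3 \<alpha> \<beta> \<gamma>D hSR hRD hSE hRE =
     (let \<gamma>R = \<alpha> * \<gamma>D; \<gamma>E = \<gamma>R / \<beta>;
          RSR = log 2 ((1 + \<gamma>R * (cmod hSR)\<^sup>2) / (1 + \<gamma>E * (cmod hSE)\<^sup>2));
          RRD = log 2 ((1 + \<gamma>D * (cmod hRD)\<^sup>2) / (1 + \<gamma>E * (cmod hRE)\<^sup>2))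
      in max (min RSR RRD) 0)"

definition P3 :: "'a measure \<Rightarrow> real \<Rightarrow> real \<Rightarrow> real \<Rightarrow> real
    \<Rightarrow> ('a \<Rightarrow> complex) \<Rightarrow> ('a \<Rightarrow> complex) \<Rightarrow> ('a \<Rightarrow> complex) \<Rightarrow> ('a \<Rightarrow> complex) \<Rightarrow> real" where
  "P3 M \<R> \<alpha> \<beta> \<gamma>D hSR hRD hSE hRE =
     measure M {\<omega> \<in> space M. R3 \<alpha> \<beta> \<gamma>D (hSR \<omega>) (hRD \<omega>) (hSE \<omega>) (hRE \<omega>) < \<R>}"

end

theory Submission
  imports Defs "HOL-Real_Asymp.Real_Asymp"
begin

text \<open>
  Since the disc of radius \<open>sqrt r\<close> has area \<open>\<pi> r\<close>, the map \<open>z \<mapsto> |z|\<^sup>2\<close> sends Lebesgue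
  measure on \<open>\<complex>\<close> to \<open>\<pi>\<close> times Lebesgue measure on \<open>[0, \<infinity>)\<close>; hence \<open>|h|\<^sup>2\<close> is Exp(1) for
  \<open>h \<sim> CN(0,1)\<close>. With \<open>t = 2 powr \<R>\<close>, the secrecy rate reaches \<open>\<R>\<close> iff both
  \<open>|h\<^sub>S\<^sub>R|\<^sup>2 \<ge> c\<^sub>1 + d\<^sub>1 |h\<^sub>S\<^sub>E|\<^sup>2\<close> and \<open>|h\<^sub>R\<^sub>D|\<^sup>2 \<ge> c\<^sub>2 + d\<^sub>2 |h\<^sub>R\<^sub>E|\<^sup>2\<close>, where the \<open>c\<^sub>i\<close> are
  multiples of \<open>(t - 1) / \<gamma>\<^sub>D\<close> and the \<open>d\<^sub>i\<close> do not depend on \<open>\<gamma>\<^sub>D\<close>. For independent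
  \<open>X, Y \<sim> Exp(1)\<close>, memorylessness gives \<open>P(X \<ge> c + d Y) = E (exp (- c - d Y)) = exp (- c) / (1 + d)\<close>.
  So \<open>\<P>\<^sub>3 = 1 - K exp (- m / \<gamma>\<^sub>D)\<close> exactly, for constants \<open>K\<close> and \<open>m\<close>, and both limits
  come from the first two terms of the expansion of \<open>exp (- m / \<gamma>\<^sub>D)\<close>.
\<close>

text \<open>For \<open>a < 0\<close> both sides vanish, since \<open>ennreal\<close> truncates negative reals to 0.\<close>

lemma emeasure_lborel_norm_sq_le:
  "emeasure lborel {z::complex. (cmod z)\<^sup>2 \<le> a} = ennreal (pi * a)"
proof (cases "a \<ge> 0")
  case True
  then have "{z::complex. (cmod z)\<^sup>2 \<le> a} = cball 0 (sqrt a)"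
    by (auto simp: real_le_rsqrt) (metis norm_ge_zero power_mono real_sqrt_pow2)
  with True show ?thesis
    by (simp add: emeasure_cball unit_ball_vol_2)
next
  case False
  then have "{z::complex. (cmod z)\<^sup>2 \<le> a} = {}"
    by (auto simp: not_le) (smt (verit) zero_le_power2)
  with False show ?thesis
    by (simp add: ennreal_eq_0_iff mult_nonneg_nonpos)
qed

lemma distr_lborel_norm_sq:
  "distr lborel borel (\<lambda>z::complex. (cmod z)\<^sup>2) = density lborel (\<lambda>r. ennreal pi * indicator {0..} r)"
proof (rule measure_eqI_generator_eq[where E="range atMost" and \<Omega>=UNIV and A="\<lambda>i. {..real i}"])
  fix A assume "A \<in> range (atMost :: real \<Rightarrow> real set)"
  then obtain a where A: "A = {..a}" by auto
  have "emeasure (density lborel (\<lambda>r. ennreal pi * indicator {0..} r)) {..a}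
      = (\<integral>\<^sup>+r. ennreal pi * indicator {0..a} r \<partial>lborel)"
    by (auto simp: emeasure_density intro!: nn_integral_cong split: split_indicator)
  also have "\<dots> = ennreal (pi * a)"
    by (simp add: nn_integral_cmult_indicator emeasure_lborel_Icc_eq ennreal_mult' ennreal_neg)
  also have "\<dots> = emeasure (distr lborel borel (\<lambda>z::complex. (cmod z)\<^sup>2)) {..a}"
    by (simp add: emeasure_distr emeasure_lborel_norm_sq_le vimage_def)
  finally show "emeasure (distr lborel borel (\<lambda>z::complex. (cmod z)\<^sup>2)) A
      = emeasure (density lborel (\<lambda>r. ennreal pi * indicator {0..} r)) A"
    by (simp add: A)
next
  show "emeasure (distr lborel borel (\<lambda>z::complex. (cmod z)\<^sup>2)) {..real i} \<noteq> \<infinity>" for i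
    by (simp add: emeasure_distr emeasure_lborel_norm_sq_le vimage_def)
qed (auto simp: Int_stable_def borel_eq_atMost real_arch_simple)

corollary nn_integral_lborel_norm_sq:
  fixes g :: "real \<Rightarrow> ennreal"
  assumes [measurable]: "g \<in> borel_measurable borel"
  shows "(\<integral>\<^sup>+z. g ((cmod (z::complex))\<^sup>2) \<partial>lborel) = pi * (\<integral>\<^sup>+r. g r * indicator {0..} r \<partial>lborel)"
proof -
  have "(\<integral>\<^sup>+z. g ((cmod (z::complex))\<^sup>2) \<partial>lborel) = (\<integral>\<^sup>+r. g r \<partial>distr lborel borel (\<lambda>z::complex. (cmod z)\<^sup>2))"
    by (simp add: nn_integral_distr)
  also have "\<dots> = pi * (\<integral>\<^sup>+r. g r * indicator {0..} r \<partial>lborel)"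
    by (simp add: distr_lborel_norm_sq nn_integral_density nn_integral_cmult[symmetric] ac_simps)
  finally show ?thesis .
qed

lemma CN01_norm_sq_exponential:
  assumes "CN01 M h"
  shows "distributed M lborel (\<lambda>\<omega>. (cmod (h \<omega>))\<^sup>2) (exponential_density 1)"
proof (rule exponential_distributedI)
  have h: "distributed M lborel h (\<lambda>z. ennreal (exp (- (cmod z)\<^sup>2) / pi))"
    using assms by (simp add: CN01_def)
  have [measurable]: "h \<in> borel_measurable M"
    using distributed_measurable[OF h] by simp
  show "(\<lambda>\<omega>. (cmod (h \<omega>))\<^sup>2) \<in> borel_measurable M"
    by measurable
  fix a :: real assume "0 \<le> a"
  have [measurable]: "{z::complex. (cmod z)\<^sup>2 \<le> a} \<in> sets borel"
    by measurable
  have "emeasure M {\<omega> \<in> space M. (cmod (h \<omega>))\<^sup>2 \<le> a}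
      = (\<integral>\<^sup>+z. ennreal (exp (- (cmod z)\<^sup>2) / pi) * indicator {z. (cmod z)\<^sup>2 \<le> a} z \<partial>lborel)"
    by (subst distributed_emeasure[OF h, symmetric]) (auto intro!: arg_cong[where f="emeasure M"])
  also have "\<dots> = (\<integral>\<^sup>+z. (\<lambda>r. ennreal (exp (- r) / pi) * indicator {..a} r) ((cmod (z::complex))\<^sup>2) \<partial>lborel)"
    by (intro nn_integral_cong) (simp split: split_indicator)
  also have "\<dots> = (\<integral>\<^sup>+r. ennreal (exponential_density 1 r) * indicator {..a} r \<partial>lborel)"
    by (subst nn_integral_lborel_norm_sq)
       (auto simp: nn_integral_cmult[symmetric] exponential_density_def ennreal_mult'[symmetric]
             intro!: nn_integral_cong split: split_indicator)
  also have "\<dots> = 1 - ennreal (exp (- a * 1))"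
    using \<open>0 \<le> a\<close>
    by (simp add: nn_integral_erlang_density erlang_CDF_0 ennreal_minus ennreal_1[symmetric] del: ennreal_1)
  finally show "emeasure M {\<omega> \<in> space M. (cmod (h \<omega>))\<^sup>2 \<le> a} = 1 - ennreal (exp (- a * 1))" .
qed simp

lemma nn_integral_exponential_density:
  "0 < l \<Longrightarrow> (\<integral>\<^sup>+x. ennreal (exponential_density l x) \<partial>lborel) = 1"
  using nn_integral_erlang_ith_moment[of l 0 0] by simp

lemma nn_integral_exponential_density_Ici:
  assumes "0 < l" "0 \<le> a"
  shows "(\<integral>\<^sup>+x. ennreal (exponential_density l x) * indicator {a..} x \<partial>lborel) = exp (- a * l)"
proof -
  have "(\<integral>\<^sup>+x. ennreal (exponential_density l x) * indicator {a..} x \<partial>lborel)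
      = (\<integral>\<^sup>+u. ennreal (exponential_density l (a + u)) * indicator {a..} (a + u) \<partial>lborel)"
    using nn_integral_real_affine[of "\<lambda>x. ennreal (exponential_density l x) * indicator {a..} x" 1 a]
    by simp
  also have "\<dots> = (\<integral>\<^sup>+u. exp (- a * l) * ennreal (exponential_density l u) \<partial>lborel)"
    using assms
    by (intro nn_integral_cong)
       (auto simp: exponential_density_def ennreal_mult'[symmetric] exp_add[symmetric] algebra_simps
             split: split_indicator)
  also have "\<dots> = exp (- a * l)"
    using assms by (simp add: nn_integral_cmult nn_integral_exponential_density)
  finally show ?thesis .
qed

lemma halfplane_in_sets_borel:
  "{p :: real \<times> real. c + d * fst p \<le> snd p} \<in> sets (borel \<Otimes>\<^sub>M borel)"
proof -
  have "{p \<in> space (borel \<Otimes>\<^sub>M borel). c + d * fst p \<le> snd p} \<in> sets (borel \<Otimes>\<^sub>M (borel :: real measure))"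
    by measurable
  then show ?thesis
    by (simp add: space_pair_measure)
qed

lemma (in prob_space) prob_exponential_ge_affine:
  assumes X: "distributed M lborel X (exponential_density k)"
    and Y: "distributed M lborel Y (exponential_density l)"
    and ind: "indep_var borel Y borel X"
    and k: "0 < k" and l: "0 < l" and c: "0 \<le> c" and d: "0 \<le> d"
  shows "prob {\<omega> \<in> space M. c + d * Y \<omega> \<le> X \<omega>} = exp (- c * k) * l / (l + d * k)"
proof -
  have "indep_var lborel (id \<circ> Y) lborel (id \<circ> X)"
    by (rule indep_var_compose[OF ind]) auto
  then have J: "distributed M (lborel \<Otimes>\<^sub>M lborel) (\<lambda>\<omega>. (Y \<omega>, X \<omega>))
      (\<lambda>(y, x). ennreal (exponential_density l y) * ennreal (exponential_density k x))"
    using X Y by (intro distributed_joint_indep) (auto intro: lborel.sigma_finite_measure_axioms)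
  define S where "S = {p :: real \<times> real. c + d * fst p \<le> snd p}"
  have S_sets: "S \<in> sets (lborel \<Otimes>\<^sub>M lborel)"
    unfolding S_def sets_pair_measure_cong[OF sets_lborel sets_lborel] by (rule halfplane_in_sets_borel)
  have pos: "0 < l + d * k"
    using k l d by (simp add: add_pos_nonneg)
  have inner: "ennreal (exponential_density l y) *
      (\<integral>\<^sup>+x. ennreal (exponential_density k x) * indicator S (y, x) \<partial>lborel)
    = ennreal (exp (- c * k) * l / (l + d * k)) * ennreal (exponential_density (l + d * k) y)" for y
  proof (cases "0 \<le> y")
    case True
    \<comment> \<open>Given \<open>Y = y\<close>, the event has probability \<open>exp (- (c + d y) k)\<close>, and this factor turns
      the density of \<open>Y\<close> into a multiple of the exponential density of rate \<open>l + d k\<close>.\<close>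
    have "(\<integral>\<^sup>+x. ennreal (exponential_density k x) * indicator S (y, x) \<partial>lborel) = exp (- (c + d * y) * k)"
      using True c d k
      by (subst nn_integral_exponential_density_Ici[symmetric])
         (auto simp: S_def intro!: nn_integral_cong split: split_indicator)
    moreover have "exponential_density l y * exp (- (c + d * y) * k)
        = exp (- c * k) * l / (l + d * k) * exponential_density (l + d * k) y"
    proof -
      have "exp (- y * l) * exp (- (c + d * y) * k) = exp (- c * k) * exp (- y * (l + d * k))"
        by (simp add: algebra_simps flip: exp_add)
      with True pos show ?thesis
        by (simp add: exponential_density_def)
    qed
    ultimately show ?thesis
      using l pos by (simp add: exponential_density_nonneg flip: ennreal_mult)
  qed (simp add: exponential_density_def)
  have "{\<omega> \<in> space M. c + d * Y \<omega> \<le> X \<omega>} = (\<lambda>\<omega>. (Y \<omega>, X \<omega>)) -` S \<inter> space M"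
    by (auto simp: S_def)
  then have "emeasure M {\<omega> \<in> space M. c + d * Y \<omega> \<le> X \<omega>}
      = (\<integral>\<^sup>+p. (\<lambda>(y, x). ennreal (exponential_density l y) * ennreal (exponential_density k x)) p
           * indicator S p \<partial>(lborel \<Otimes>\<^sub>M lborel))"
    using distributed_emeasure[OF J S_sets] by simp
  also have "\<dots> = (\<integral>\<^sup>+y. ennreal (exponential_density l y) *
      (\<integral>\<^sup>+x. ennreal (exponential_density k x) * indicator S (y, x) \<partial>lborel) \<partial>lborel)"
    using S_sets
    by (subst lborel.nn_integral_fst[symmetric])
       (auto simp: case_prod_beta mult.assoc nn_integral_cmult[symmetric] intro!: nn_integral_cong)
  also have "\<dots> = ennreal (exp (- c * k) * l / (l + d * k))"
    using pos by (simp add: inner nn_integral_cmult nn_integral_exponential_density)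
  finally show ?thesis
    using l pos by (simp add: emeasure_eq_measure ennreal_inj)
qed

lemma (in prob_space) indep_var_of_indep_vars:
  assumes ind: "indep_vars (\<lambda>_. N) X I" and "i \<in> I" "j \<in> I" "i \<noteq> j"
  shows "indep_var N (X i) N (X j)"
proof -
  have "indep_var N ((\<lambda>x. x i) \<circ> (\<lambda>\<omega>. restrict (\<lambda>k. X k \<omega>) {i}))
                  N ((\<lambda>x. x j) \<circ> (\<lambda>\<omega>. restrict (\<lambda>k. X k \<omega>) {j}))"
    by (rule indep_var_compose[OF indep_var_restrict[OF ind]]) (use assms in auto)
  then show ?thesis
    by (simp add: comp_def)
qed

lemma (in prob_space) indep_var_pairs_of_indep_vars:
  assumes ind: "indep_vars (\<lambda>_. N) X I" and "a \<in> I" "b \<in> I" "c \<in> I" "d \<in> I"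
    and "{a, b} \<inter> {c, d} = {}"
  shows "indep_var (N \<Otimes>\<^sub>M N) (\<lambda>\<omega>. (X a \<omega>, X b \<omega>)) (N \<Otimes>\<^sub>M N) (\<lambda>\<omega>. (X c \<omega>, X d \<omega>))"
proof -
  have "indep_var (N \<Otimes>\<^sub>M N) ((\<lambda>x. (x a, x b)) \<circ> (\<lambda>\<omega>. restrict (\<lambda>k. X k \<omega>) {a, b}))
                  (N \<Otimes>\<^sub>M N) ((\<lambda>x. (x c, x d)) \<circ> (\<lambda>\<omega>. restrict (\<lambda>k. X k \<omega>) {c, d}))"
    by (rule indep_var_compose[OF indep_var_restrict[OF ind]]) (use assms in auto)
  then show ?thesis
    by (simp add: comp_def)
qed

lemma le_ratio_iff:
  fixes g e t X Y :: real
  assumes "g > 0" "e \<ge> 0" "X \<ge> 0" "Y \<ge> 0"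
  shows "t \<le> (1 + g * X) / (1 + e * Y) \<longleftrightarrow> (t - 1) / g + (t * e / g) * Y \<le> X"
proof -
  have "1 + e * Y > 0"
    using assms by (simp add: add_pos_nonneg)
  then have "t \<le> (1 + g * X) / (1 + e * Y) \<longleftrightarrow> t * (1 + e * Y) \<le> 1 + g * X"
    by (simp add: pos_le_divide_eq)
  also have "\<dots> \<longleftrightarrow> (t - 1 + t * e * Y) / g \<le> X"
    using assms by (simp add: pos_divide_le_eq algebra_simps)
  finally show ?thesis
    by (simp add: add_divide_distrib)
qed

lemma R3_less_iff:
  fixes \<alpha> \<beta> \<gamma> \<R> :: real and a b c e :: complex
  assumes "\<alpha> > 0" "\<beta> > 0" "\<gamma> > 0" "\<R> > 0"
  shows "R3 \<alpha> \<beta> \<gamma> a b c e < \<R> \<longleftrightarrow>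
    \<not> ((2 powr \<R> - 1) / (\<alpha> * \<gamma>) + 2 powr \<R> / \<beta> * (cmod c)\<^sup>2 \<le> (cmod a)\<^sup>2 \<and>
       (2 powr \<R> - 1) / \<gamma> + 2 powr \<R> * \<alpha> / \<beta> * (cmod e)\<^sup>2 \<le> (cmod b)\<^sup>2)"
proof -
  define t where "t = 2 powr \<R>"
  have "0 < (1 + \<alpha> * \<gamma> * (cmod a)\<^sup>2) / (1 + \<alpha> * \<gamma> / \<beta> * (cmod c)\<^sup>2)"
    "0 < (1 + \<gamma> * (cmod b)\<^sup>2) / (1 + \<alpha> * \<gamma> / \<beta> * (cmod e)\<^sup>2)"
    using assms by (auto intro!: divide_pos_pos add_pos_nonneg)
  moreover have "R3 \<alpha> \<beta> \<gamma> a b c e < \<R> \<longleftrightarrow>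
     \<not> (\<R> \<le> log 2 ((1 + \<alpha> * \<gamma> * (cmod a)\<^sup>2) / (1 + \<alpha> * \<gamma> / \<beta> * (cmod c)\<^sup>2)) \<and>
        \<R> \<le> log 2 ((1 + \<gamma> * (cmod b)\<^sup>2) / (1 + \<alpha> * \<gamma> / \<beta> * (cmod e)\<^sup>2)))"
    using assms by (auto simp: R3_def Let_def)
  ultimately have "R3 \<alpha> \<beta> \<gamma> a b c e < \<R> \<longleftrightarrow>
     \<not> (t \<le> (1 + (\<alpha> * \<gamma>) * (cmod a)\<^sup>2) / (1 + \<alpha> * \<gamma> / \<beta> * (cmod c)\<^sup>2) \<and>
        t \<le> (1 + \<gamma> * (cmod b)\<^sup>2) / (1 + \<alpha> * \<gamma> / \<beta> * (cmod e)\<^sup>2))"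
    by (simp add: le_log_iff t_def)
  also have "\<dots> \<longleftrightarrow> \<not> ((t - 1) / (\<alpha> * \<gamma>) + t / \<beta> * (cmod c)\<^sup>2 \<le> (cmod a)\<^sup>2 \<and>
       (t - 1) / \<gamma> + t * \<alpha> / \<beta> * (cmod e)\<^sup>2 \<le> (cmod b)\<^sup>2)"
    using assms le_ratio_iff[of "\<alpha> * \<gamma>" "\<alpha> * \<gamma> / \<beta>" "(cmod a)\<^sup>2" "(cmod c)\<^sup>2" t]
      le_ratio_iff[of "\<gamma>" "\<alpha> * \<gamma> / \<beta>" "(cmod b)\<^sup>2" "(cmod e)\<^sup>2" t] by simp
  finally show ?thesis
    unfolding t_def .
qed

lemma (in prob_space) prob_exponential_ge_affine_pairs:
  assumes ind: "indep_vars (\<lambda>_. borel) X I"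
    and X: "\<And>i. i \<in> I \<Longrightarrow> distributed M lborel (X i) (exponential_density 1)"
    and I: "a \<in> I" "b \<in> I" "a' \<in> I" "b' \<in> I" and "distinct [a, b, a', b']"
    and "0 \<le> c" "0 \<le> d" "0 \<le> c'" "0 \<le> d'"
  shows "prob {\<omega> \<in> space M. c + d * X b \<omega> \<le> X a \<omega> \<and> c' + d' * X b' \<omega> \<le> X a' \<omega>}
    = exp (- c) / (1 + d) * (exp (- c') / (1 + d'))"
proof -
  define S S' where "S = {p :: real \<times> real. c + d * fst p \<le> snd p}"
    and "S' = {p :: real \<times> real. c' + d' * fst p \<le> snd p}"
  have sets: "S \<in> sets (borel \<Otimes>\<^sub>M borel)" "S' \<in> sets (borel \<Otimes>\<^sub>M borel)"
    unfolding S_def S'_def by (rule halfplane_in_sets_borel)+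
  have "indep_var (borel \<Otimes>\<^sub>M borel) (\<lambda>\<omega>. (X b \<omega>, X a \<omega>)) (borel \<Otimes>\<^sub>M borel) (\<lambda>\<omega>. (X b' \<omega>, X a' \<omega>))"
    using assms by (intro indep_var_pairs_of_indep_vars[OF ind]) auto
  from indep_varD[OF this sets]
  have "prob {\<omega> \<in> space M. c + d * X b \<omega> \<le> X a \<omega> \<and> c' + d' * X b' \<omega> \<le> X a' \<omega>}
      = prob {\<omega> \<in> space M. c + d * X b \<omega> \<le> X a \<omega>} * prob {\<omega> \<in> space M. c' + d' * X b' \<omega> \<le> X a' \<omega>}"
    by (simp add: S_def S'_def vimage_def Int_def conj_commute)
  also have "\<dots> = exp (- c) / (1 + d) * (exp (- c') / (1 + d'))"
  proof -
    have "prob {\<omega> \<in> space M. u + v * X j \<omega> \<le> X i \<omega>} = exp (- u) / (1 + v)"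
      if "i \<in> I" "j \<in> I" "i \<noteq> j" "0 \<le> u" "0 \<le> v" for i j u v
      using prob_exponential_ge_affine[OF X[OF that(1)] X[OF that(2)]
          indep_var_of_indep_vars[OF ind that(2,1) that(3)[symmetric]]] that(4,5)
      by simp
    then show ?thesis
      using assms by simp
  qed
  finally show ?thesis .
qed

lemma (in prob_space) P3_closed_form:
  fixes \<R> \<alpha> \<beta> \<gamma> :: real and hSR hRD hSE hRE :: "'a \<Rightarrow> complex"
  assumes "\<R> > 0" "\<alpha> > 0" "\<beta> > 0" "\<gamma> > 0"
    and "CN01 M hSR" "CN01 M hRD" "CN01 M hSE" "CN01 M hRE"
    and ind: "indep_vars (\<lambda>_. borel) (\<lambda>i::nat. [hSR, hRD, hSE, hRE] ! i) {0..<4}"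
  shows "P3 M \<R> \<alpha> \<beta> \<gamma> hSR hRD hSE hRE =
    1 - exp (- ((2 powr \<R> - 1) * (1 + 1 / \<alpha>)) / \<gamma>)
          / ((1 + \<alpha> / \<beta> * 2 powr \<R>) * (1 + 1 / \<beta> * 2 powr \<R>))"
proof -
  define t where "t = 2 powr \<R>"
  define c1 d1 c2 d2 where "c1 = (t - 1) / (\<alpha> * \<gamma>)" and "d1 = t / \<beta>"
    and "c2 = (t - 1) / \<gamma>" and "d2 = t * \<alpha> / \<beta>"
  have "t > 1"
    using assms by (simp add: t_def)
  then have nonneg: "c1 \<ge> 0" "d1 \<ge> 0" "c2 \<ge> 0" "d2 \<ge> 0"
    using assms by (auto simp: c1_def d1_def c2_def d2_def)
  define G where "G i = (\<lambda>\<omega>. (cmod (([hSR, hRD, hSE, hRE] ! i) \<omega>))\<^sup>2)" for i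
  have "indep_vars (\<lambda>_. borel) G {0..<4}"
    unfolding G_def by (rule indep_vars_compose2[OF ind]) simp
  moreover have G: "distributed M lborel (G i) (exponential_density 1)" if "i \<in> {0..<4}" for i
    using that assms(5-8) CN01_norm_sq_exponential
    by (auto simp: G_def less_Suc_eq numeral_eq_Suc)
  ultimately have "prob {\<omega> \<in> space M. c1 + d1 * G 2 \<omega> \<le> G 0 \<omega> \<and> c2 + d2 * G 3 \<omega> \<le> G 1 \<omega>}
      = exp (- c1) / (1 + d1) * (exp (- c2) / (1 + d2))"
    using nonneg by (intro prob_exponential_ge_affine_pairs) auto
  moreover have [measurable]: "G i \<in> borel_measurable M" if "i \<in> {0..<4}" for i
    using distributed_measurable[OF G[OF that]] by simp
  moreover have "{\<omega> \<in> space M. R3 \<alpha> \<beta> \<gamma> (hSR \<omega>) (hRD \<omega>) (hSE \<omega>) (hRE \<omega>) < \<R>}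
      = space M - {\<omega> \<in> space M. c1 + d1 * G 2 \<omega> \<le> G 0 \<omega> \<and> c2 + d2 * G 3 \<omega> \<le> G 1 \<omega>}"
    using assms(1-4) by (auto simp: G_def R3_less_iff c1_def d1_def c2_def d2_def t_def)
  ultimately have "P3 M \<R> \<alpha> \<beta> \<gamma> hSR hRD hSE hRE = 1 - exp (- c1) / (1 + d1) * (exp (- c2) / (1 + d2))"
    by (simp add: P3_def prob_compl)
  also have "\<dots> = 1 - exp (- ((t - 1) * (1 + 1 / \<alpha>)) / \<gamma>) / ((1 + \<alpha> / \<beta> * t) * (1 + 1 / \<beta> * t))"
    using assms by (simp add: c1_def d1_def c2_def d2_def field_simps flip: exp_add)
  finally show ?thesis
    unfolding t_def .
qed

theorem theorem9:
  fixes M :: "'a measure" and \<R> \<alpha> \<beta> :: real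
    and hSR hRD hSE hRE :: "'a \<Rightarrow> complex"
  assumes "prob_space M"
    and "\<R> > 0" and "\<alpha> > 0" and "\<beta> > 0"
    and "CN01 M hSR" and "CN01 M hRD" and "CN01 M hSE" and "CN01 M hRE"
    and "prob_space.indep_vars M (\<lambda>_. borel)
           (\<lambda>i::nat. [hSR, hRD, hSE, hRE] ! i) {0..<4}"
  shows "((\<lambda>\<gamma>D. P3 M \<R> \<alpha> \<beta> \<gamma>D hSR hRD hSE hRE)
            \<longlongrightarrow> 1 - (\<beta> / (\<beta> + \<alpha> * 2 powr \<R>)) * (\<beta> / (\<beta> + 2 powr \<R>))) at_top
     \<and> ((\<lambda>\<gamma>D. \<gamma>D * (P3 M \<R> \<alpha> \<beta> \<gamma>D hSR hRD hSE hRE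
              - (1 - (\<beta> / (\<beta> + \<alpha> * 2 powr \<R>)) * (\<beta> / (\<beta> + 2 powr \<R>)))))
            \<longlongrightarrow> (2 powr \<R> - 1) * (1 + 1 / \<alpha>)
                 / ((1 + \<alpha> / \<beta> * 2 powr \<R>) * (1 + 1 / \<beta> * 2 powr \<R>))) at_top"
proof -
  interpret prob_space M by fact
  define t K m where "t = 2 powr \<R>" and "K = 1 / ((1 + \<alpha> / \<beta> * t) * (1 + 1 / \<beta> * t))"
    and "m = (t - 1) * (1 + 1 / \<alpha>)"
  have P3: "\<forall>\<^sub>F \<gamma> in at_top. P3 M \<R> \<alpha> \<beta> \<gamma> hSR hRD hSE hRE = 1 - K * exp (- m / \<gamma>)"
    using eventually_gt_at_top[of 0]
    by eventually_elim (simp add: P3_closed_form assms K_def m_def t_def)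
  have "t > 0"
    by (simp add: t_def)
  then have limit: "1 - \<beta> / (\<beta> + \<alpha> * t) * (\<beta> / (\<beta> + t)) = 1 - K"
    and slope: "(t - 1) * (1 + 1 / \<alpha>) / ((1 + \<alpha> / \<beta> * t) * (1 + 1 / \<beta> * t)) = K * m"
    using assms by (simp_all add: K_def m_def field_simps)
  have scaled_P3: "\<forall>\<^sub>F \<gamma> in at_top. \<gamma> * (P3 M \<R> \<alpha> \<beta> \<gamma> hSR hRD hSE hRE - (1 - K))
      = \<gamma> * ((1 - K * exp (- m / \<gamma>)) - (1 - K))"
    using P3 by eventually_elim simp
  have "((\<lambda>\<gamma>. 1 - K * exp (- m / \<gamma>)) \<longlongrightarrow> 1 - K) at_top"
    by real_asymp
  moreover have "((\<lambda>\<gamma>. \<gamma> * ((1 - K * exp (- m / \<gamma>)) - (1 - K))) \<longlongrightarrow> K * m) at_top"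
    by real_asymp
  ultimately show ?thesis
    unfolding t_def[symmetric] limit slope tendsto_cong[OF P3] tendsto_cong[OF scaled_P3] ..
qed

end
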